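(* Let $T\ge 1$ and let $p$ be a $T$-period random joint choice rule on a finite set $X$. Then $p$ is consistent with consumption dependent random utility if and only if it satisfies marginality and complete monotonicity.
   Context: $\mathcal{X}$ is the set of nonempty subsets of $X$, $\mathcal{L}(X)$ the linear orders, $N(x,A)=\{\succ: x\succ y\ \forall y\in A\setminus\{x\}\}$. For vectors, $\mathbf{x}^\tau=(x_1,\dots,x_\tau)$, $\mathbf{A}^\tau=(A_1,\dots,A_\tau)\in\mathcal{X}^\tau$, $\succ^\tau=(\succ_1,\dots,\succ_\tau)$, and $\mathbf{x}^\tau\in\mathbf{A}^\tau$ means $x_i\in A_i$ for all $i$. A $T$-period random joint choice rule assigns to each $\mathbf{A}^T\in\mathcal{X}^T$ and $\mathbf{x}^T\in\mathbf{A}^T$ a number $p(\mathbf{x}^T,\mathbf{A}^T)\ge0$ with $\sum_{\mathbf{x}^T\in\mathbf{A}^T}p(\mathbf{x}^T,\mathbf{A}^T)=1$. For $\tau<T$ define recursively $p(\mathbf{x}^\tau,\mathbf{A}^\tau)=\sum_{y\in X}p(\mathbf{x}^\tau,y,\mathbf{A}^\tau,X)$. Marginality: for every $\tau\in\{1,\dots,T-1\}$, $\mathbf{A}^\tau\in\mathcal{X}^\tau$, $\mathbf{x}^\tau\in\mathbf{A}^\tau$ and $B,C\in\mathcal{X}$, $\sum_{y\in B}p(\mathbf{x}^\tau,y,\mathbf{A}^\tau,B)=\sum_{y\in C}p(\mathbf{x}^\tau,y,\mathbf{A}^\tau,C)$. The Möbius inverse $q$ is defined by $p(\mathbf{x}^T,\mathbf{A}^T)=\sum_{A_1\subseteq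 A_1'\subseteq X}\cdots\sum_{A_T\subseteq A_T'\subseteq X}q(\mathbf{x}^T,A_1',\dots,A_T')$; complete monotonicity means $q(\mathbf{x}^T,\mathbf{A}^T)\ge0$ for all $\mathbf{A}^T$, $\mathbf{x}^T\in\mathbf{A}^T$. A transition function of degree $n$ is a map $t^n:X^n\times\mathcal{L}(X)^n\to\Delta(\mathcal{L}(X))$, with $t^n_{\succ'}(\cdot)$ the probability of $\succ'$. $p$ is consistent with consumption dependent random utility if there exist $\nu\in\Delta(\mathcal{L}(X))$ and transition functions $t^1,\dots,t^{T-1}$ ($t^n$ of degree $n$) such that for all $\mathbf{A}^T$, $\mathbf{x}^T\in\mathbf{A}^T$: $p(\mathbf{x}^T,\mathbf{A}^T)=\sum_{\succ_1\in N(x_1,A_1)}\cdots\sum_{\succ_T\in N(x_T,A_T)}\nu(\succ_1)\prod_{\tau=2}^T t^{\tau-1}_{\succ_\tau}(\mathbf{x}^{\tau-1},\succ^{\tau-1})$. *)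

theory Defs
  imports "HOL-Probability.Probability"
begin

text \<open>The ground set X is the universe of a finite type 'a.  A linear order (strict preference) is a relation r with
  (x,y) in r meaning "x is preferred to y".\<close>

definition lorders :: "'a rel set" where
  "lorders = {r. strict_linear_order r}"

definition Nset :: "'a \<Rightarrow> 'a set \<Rightarrow> 'a rel set" where
  "Nset x A = {r \<in> lorders. \<forall>y \<in> A - {x}. (x, y) \<in> r}"

definition vec_in :: "'b list \<Rightarrow> 'b set list \<Rightarrow> bool" where
  "vec_in xs As \<longleftrightarrow> length xs = length As \<and> (\<forall>i < length As. xs ! i \<in> As ! i)"

definition menus :: "nat \<Rightarrow> 'a set list set" where
  "menus n = {As. length As = n \<and> (\<forall>A \<in> set As. A \<noteq> {})}"

definition is_rjcr :: "nat \<Rightarrow> ('a::finite list \<Rightarrow> 'a set list \<Rightarrow> real) \<Rightarrow> bool" where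
  "is_rjcr T p \<longleftrightarrow> (\<forall>As \<in> menus T.
      (\<forall>xs. vec_in xs As \<longrightarrow> p xs As \<ge> 0) \<and> (\<Sum>xs \<in> {xs. vec_in xs As}. p xs As) = 1)"

text \<open>Recursive extension to shorter vectors: marg p n xs As is p(x^tau, A^tau)
  with tau = T - n.\<close>
fun marg :: "('a::finite list \<Rightarrow> 'a set list \<Rightarrow> real) \<Rightarrow> nat \<Rightarrow> 'a list \<Rightarrow> 'a set list \<Rightarrow> real" where
  "marg p 0 xs As = p xs As"
| "marg p (Suc n) xs As = (\<Sum>y \<in> UNIV. marg p n (xs @ [y]) (As @ [UNIV]))"

definition marginality :: "nat \<Rightarrow> ('a::finite list \<Rightarrow> 'a set list \<Rightarrow> real) \<Rightarrow> bool" where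
  "marginality T p \<longleftrightarrow> (\<forall>\<tau> \<in> {1..T-1}. \<forall>As \<in> menus \<tau>. \<forall>xs. vec_in xs As \<longrightarrow>
      (\<forall>B C. B \<noteq> {} \<longrightarrow> C \<noteq> {} \<longrightarrow>
        (\<Sum>y \<in> B. marg p (T - (\<tau> + 1)) (xs @ [y]) (As @ [B])) =
        (\<Sum>y \<in> C. marg p (T - (\<tau> + 1)) (xs @ [y]) (As @ [C]))))"

definition supvecs :: "'a set list \<Rightarrow> 'a set list set" where
  "supvecs As = {Bs. length Bs = length As \<and> (\<forall>i < length As. As ! i \<subseteq> Bs ! i)}"

definition is_moebius_inverse ::
  "nat \<Rightarrow> ('a::finite list \<Rightarrow> 'a set list \<Rightarrow> real) \<Rightarrow> ('a list \<Rightarrow> 'a set list \<Rightarrow> real) \<Rightarrow> bool" where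
  "is_moebius_inverse T p q \<longleftrightarrow> (\<forall>As \<in> menus T. \<forall>xs. vec_in xs As \<longrightarrow>
      p xs As = (\<Sum>Bs \<in> supvecs As. q xs Bs))"

definition complete_monotone :: "nat \<Rightarrow> ('a::finite list \<Rightarrow> 'a set list \<Rightarrow> real) \<Rightarrow> bool" where
  "complete_monotone T p \<longleftrightarrow> (\<exists>q. is_moebius_inverse T p q \<and>
      (\<forall>As \<in> menus T. \<forall>xs. vec_in xs As \<longrightarrow> q xs As \<ge> 0))"

text \<open>Consumption dependent random utility. nu is a distribution on linear orders; t xs rs
  is the transition function of degree n = length xs = length rs.\<close>
definition cdru :: "nat \<Rightarrow> ('a::finite list \<Rightarrow> 'a set list \<Rightarrow> real) \<Rightarrow> bool" where
  "cdru T p \<longleftrightarrow> (\<exists>(nu :: 'a rel pmf) (t :: 'a list \<Rightarrow> 'a rel list \<Rightarrow> 'a rel pmf).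
      set_pmf nu \<subseteq> lorders \<and>
      (\<forall>n \<in> {1..T-1}. \<forall>xs rs. length xs = n \<longrightarrow> length rs = n \<longrightarrow> set rs \<subseteq> lorders \<longrightarrow>
          set_pmf (t xs rs) \<subseteq> lorders) \<and>
      (\<forall>As \<in> menus T. \<forall>xs. vec_in xs As \<longrightarrow>
          p xs As = (\<Sum>rs \<in> {rs. vec_in rs (map2 Nset xs As)}.
                       pmf nu (rs ! 0) *
                       (\<Prod>k \<in> {1..<T}. pmf (t (take k xs) (take k rs)) (rs ! k)))))"

end

theory Submission
  imports Defs
begin

(*
  In a linear order with x on top of A, the lower contour set of x is some B >= A, so N(x, A) is
  the disjoint union of the sets R(x, B), B >= A, of orders in which the lower contour set of x
  is exactly B.  For a consumption dependent random utility this exhibits the Moebius inverse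
  q(x, B) as the probability that every x_k has lower contour set exactly B_k, so q >= 0.
  Marginality holds because the sets N(y, B), y in B, partition the linear orders, so the last
  period can be summed out.

  Conversely, marginality lets p and q be extended consistently to shorter histories.  Given a
  history, the next-period values of q, normalised, form a nonnegative f(y, C) with
  sum_{y in D} sum_{C >= D} f(y, C) = 1 for all nonempty D.  Falmagne's construction turns such
  an f into a random linear order in which y has lower contour set C with probability f(y, C):
  list the alternatives from the top, choosing y next among the unlisted set C with probability
  f(y, C) / sum_{z in C} f(z, C).  Flow conservation in the lattice of subsets shows that C is
  reached as the unlisted set with probability sum_{z in C} f(z, C).  Using these random orders,
  conditioned on the lower contour sets of the history, as transitions reproduces q and hence p.
*)

section \<open>Lower contour sets of linear orders\<close>

definition lower_set :: "'a \<Rightarrow> 'a rel \<Rightarrow> 'a set" where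
  "lower_set x r = insert x {y. (x, y) \<in> r}"

definition Nset_exact :: "'a \<Rightarrow> 'a set \<Rightarrow> 'a rel set" where
  "Nset_exact x B = {r \<in> lorders. lower_set x r = B}"

lemma Nset_eq_lower_set: "Nset x A = {r \<in> lorders. A \<subseteq> lower_set x r}"
  unfolding Nset_def lower_set_def by auto

lemma lorders_top_exists:
  assumes r: "r \<in> lorders" and "finite A" "A \<noteq> {}"
  shows "\<exists>x\<in>A. A \<subseteq> lower_set x r"
proof -
  have "acyclic r"
    using r by (simp add: lorders_def strict_linear_order_on_def acyclic_irrefl)
  then have "wf (r \<inter> A \<times> A)"
    using \<open>finite A\<close> by (intro finite_acyclic_wf) (auto intro: acyclic_subset)
  then obtain x where "x \<in> A" "\<forall>y. (y, x) \<in> r \<inter> A \<times> A \<longrightarrow> y \<notin> A"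
    using \<open>A \<noteq> {}\<close> by (auto simp only: wf_iff_ex_minimal)
  then have top: "(y, x) \<notin> r" if "y \<in> A" for y
    using that by blast
  have "y \<in> lower_set x r" if "y \<in> A" for y
  proof (cases "y = x")
    case False
    then have "(x, y) \<in> r \<or> (y, x) \<in> r"
      using r by (simp add: lorders_def strict_linear_order_on_def total_on_def)
    with top[OF that] show ?thesis
      by (simp add: lower_set_def)
  qed (simp add: lower_set_def)
  with \<open>x \<in> A\<close> show ?thesis
    by blast
qed

lemma lorders_top_unique:
  assumes r: "r \<in> lorders" and "x \<in> A" "y \<in> A" "A \<subseteq> lower_set x r" "A \<subseteq> lower_set y r"
  shows "x = y"
proof (rule ccontr)
  assume "x \<noteq> y"
  then have "(x, y) \<in> r" "(y, x) \<in> r"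
    using assms unfolding lower_set_def by auto
  then show False
    using r by (auto simp: lorders_def strict_linear_order_on_def irrefl_def dest: transD)
qed

lemma sum_Nset_partition:
  fixes h :: "'a::finite rel \<Rightarrow> 'b::comm_monoid_add"
  assumes "B \<noteq> {}"
  shows "(\<Sum>y\<in>B. \<Sum>r\<in>Nset y B. h r) = (\<Sum>r\<in>lorders. h r)"
proof -
  have "(\<Sum>y\<in>B. \<Sum>r\<in>Nset y B. h r) = (\<Sum>r\<in>(\<Union>y\<in>B. Nset y B). h r)"
    by (rule sum.UNION_disjoint[symmetric])
      (auto simp: Nset_eq_lower_set dest: lorders_top_unique)
  also have "(\<Union>y\<in>B. Nset y B) = lorders"
    using lorders_top_exists[OF _ _ assms] by (auto simp: Nset_eq_lower_set)
  finally show ?thesis .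
qed

lemma vec_in_Nil [simp]: "vec_in xs [] \<longleftrightarrow> xs = []"
  by (simp add: vec_in_def)

lemma vec_in_length: "vec_in xs As \<Longrightarrow> length xs = length As"
  by (simp add: vec_in_def)

lemma vec_in_snoc [simp]: "vec_in (xs @ [x]) (As @ [A]) \<longleftrightarrow> vec_in xs As \<and> x \<in> A"
  by (auto simp: vec_in_def nth_append less_Suc_eq)

lemma vec_in_map2:
  "length xs = length As \<Longrightarrow>
    vec_in rs (map2 F xs As) \<longleftrightarrow> length rs = length xs \<and> (\<forall>i<length xs. rs ! i \<in> F (xs ! i) (As ! i))"
  by (simp add: vec_in_def)

lemma vec_in_menus: "vec_in xs As \<Longrightarrow> As \<in> menus (length As)"
  unfolding vec_in_def menus_def by (fastforce simp: in_set_conv_nth)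

lemma finite_vec_in: "finite {xs :: 'b::finite list. vec_in xs As}"
  by (rule finite_subset[OF _ finite_lists_length_eq[of UNIV "length As"]])
    (auto simp: vec_in_def)

lemma sum_vec_in_snoc:
  fixes h :: "'b::finite list \<Rightarrow> 'c::comm_monoid_add"
  shows "(\<Sum>xs | vec_in xs (As @ [A]). h xs) = (\<Sum>xs | vec_in xs As. \<Sum>x\<in>A. h (xs @ [x]))"
proof -
  have "{xs. vec_in xs (As @ [A])} = (\<lambda>(xs, x). xs @ [x]) ` ({xs. vec_in xs As} \<times> A)"
  proof (intro equalityI subsetI)
    fix rs assume "rs \<in> {xs. vec_in xs (As @ [A])}"
    moreover from this have "rs \<noteq> []"
      by (auto dest: vec_in_length)
    then obtain ys y where "rs = ys @ [y]"
      by (cases rs rule: rev_cases) auto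
    ultimately show "rs \<in> (\<lambda>(xs, x). xs @ [x]) ` ({xs. vec_in xs As} \<times> A)"
      by auto
  qed auto
  moreover have "inj_on (\<lambda>(xs, x). xs @ [x]) ({xs. vec_in xs As} \<times> A)"
    by (auto simp: inj_on_def)
  ultimately show ?thesis
    by (simp add: sum.reindex sum.cartesian_product case_prod_unfold)
qed

lemma sum_vec_in_singleton:
  fixes h :: "'b::finite list \<Rightarrow> 'c::comm_monoid_add"
  shows "(\<Sum>xs | vec_in xs [A]. h xs) = (\<Sum>x\<in>A. h [x])"
  using sum_vec_in_snoc[of h "[]" A] by simp

lemma supvecs_eq_vec_in: "supvecs As = {Bs. vec_in Bs (map (\<lambda>A. {B. A \<subseteq> B}) As)}"
  by (auto simp: supvecs_def vec_in_def)

lemma supvecs_Nil [simp]: "supvecs [] = {[]}"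
  by (simp add: supvecs_def)

lemma supsets_UNIV [simp]: "{B. UNIV \<subseteq> B} = {UNIV}"
  by auto

lemma finite_supvecs: "finite (supvecs (As :: 'a::finite set list))"
  unfolding supvecs_eq_vec_in by (rule finite_vec_in)

lemma sum_supvecs_snoc:
  fixes h :: "'a::finite set list \<Rightarrow> 'c::comm_monoid_add"
  shows "(\<Sum>Bs\<in>supvecs (As @ [A]). h Bs) = (\<Sum>Bs\<in>supvecs As. \<Sum>B | A \<subseteq> B. h (Bs @ [B]))"
  unfolding supvecs_eq_vec_in by (simp add: sum_vec_in_snoc)

lemma vec_in_supvecs: "vec_in xs As \<Longrightarrow> Bs \<in> supvecs As \<Longrightarrow> vec_in xs Bs"
  by (auto simp: vec_in_def supvecs_def)

lemma map2_lower_set_eq_iff: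
  "length rs = length xs \<Longrightarrow>
    map2 lower_set xs rs = Bs \<longleftrightarrow> length Bs = length xs \<and> (\<forall>i<length xs. lower_set (xs ! i) (rs ! i) = Bs ! i)"
  by (auto simp: list_eq_iff_nth_eq)

lemma map2_lower_set_Nset_exact:
  "length xs = length Bs \<Longrightarrow> vec_in rs (map2 Nset_exact xs Bs) \<Longrightarrow> map2 lower_set xs rs = Bs"
  by (simp add: vec_in_map2 map2_lower_set_eq_iff Nset_exact_def)

lemma Nset_vec_lower_sets_eq:
  assumes "length xs = length As" "Bs \<in> supvecs As"
  shows "{rs. vec_in rs (map2 Nset xs As) \<and> map2 lower_set xs rs = Bs}
       = {rs. vec_in rs (map2 Nset_exact xs Bs)}"
proof (intro set_eqI)
  fix rs
  have "length Bs = length xs" "\<forall>i<length xs. As ! i \<subseteq> Bs ! i"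
    using assms by (auto simp: supvecs_def)
  then show "rs \<in> {rs. vec_in rs (map2 Nset xs As) \<and> map2 lower_set xs rs = Bs}
      \<longleftrightarrow> rs \<in> {rs. vec_in rs (map2 Nset_exact xs Bs)}"
    using assms(1)
    by (cases "length rs = length xs")
      (simp_all add: vec_in_map2 map2_lower_set_eq_iff Nset_eq_lower_set Nset_exact_def, blast)
qed

lemma sum_Nset_vec_eq_sum_supvecs:
  fixes h :: "'a::finite rel list \<Rightarrow> 'c::comm_monoid_add"
  assumes len: "length xs = length As"
  shows "(\<Sum>rs | vec_in rs (map2 Nset xs As). h rs)
       = (\<Sum>Bs\<in>supvecs As. \<Sum>rs | vec_in rs (map2 Nset_exact xs Bs). h rs)"
proof -
  have "map2 lower_set xs ` {rs. vec_in rs (map2 Nset xs As)} \<subseteq> supvecs As"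
    using len by (fastforce simp: vec_in_map2 supvecs_def Nset_eq_lower_set)
  from sum.group[OF finite_vec_in finite_supvecs this, of h, symmetric] show ?thesis
    using len by (simp add: Nset_vec_lower_sets_eq cong: sum.cong)
qed

(* The transition t xs rs follows the consumption history xs and the preference history rs;
   t [] [] plays the role of the initial distribution nu. *)

definition chain_prob :: "('b list \<Rightarrow> 'a rel list \<Rightarrow> 'a rel pmf) \<Rightarrow> 'b list \<Rightarrow> 'a rel list \<Rightarrow> real" where
  "chain_prob t xs rs = (\<Prod>k<length rs. pmf (t (take k xs) (take k rs)) (rs ! k))"

lemma chain_prob_Nil [simp]: "chain_prob t xs [] = 1"
  by (simp add: chain_prob_def)

lemma chain_prob_nonneg: "0 \<le> chain_prob t xs rs"
  unfolding chain_prob_def by (simp add: prod_nonneg)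

lemma chain_prob_snoc:
  "length rs = length xs \<Longrightarrow> chain_prob t (xs @ [x]) (rs @ [r]) = chain_prob t xs rs * pmf (t xs rs) r"
  by (simp add: chain_prob_def nth_append)

lemma chain_prob_unfold_first:
  assumes "rs \<noteq> []"
  shows "chain_prob t xs rs
       = pmf (t [] []) (rs ! 0) * (\<Prod>k\<in>{1..<length rs}. pmf (t (take k xs) (take k rs)) (rs ! k))"
  using assms by (simp add: chain_prob_def lessThan_atLeast0 prod.atLeast_Suc_lessThan)

lemma sum_chain_prob_snoc:
  fixes F :: "'b \<Rightarrow> 'c \<Rightarrow> 'a::finite rel set"
  assumes "length xs = length As"
  shows "(\<Sum>rs | vec_in rs (map2 F (xs @ [x]) (As @ [A])). chain_prob t (xs @ [x]) rs)
       = (\<Sum>rs | vec_in rs (map2 F xs As). chain_prob t xs rs * (\<Sum>r\<in>F x A. pmf (t xs rs) r))"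
  using assms
  by (auto simp: sum_vec_in_snoc chain_prob_snoc sum_distrib_left vec_in_map2 intro!: sum.cong)

definition lorder_kernel :: "nat \<Rightarrow> ('a list \<Rightarrow> 'a rel list \<Rightarrow> 'a rel pmf) \<Rightarrow> bool" where
  "lorder_kernel T t \<longleftrightarrow> (\<forall>xs rs. length xs = length rs \<longrightarrow> length xs < T \<longrightarrow> set rs \<subseteq> lorders \<longrightarrow>
      set_pmf (t xs rs) \<subseteq> lorders)"

definition chain_represents ::
  "nat \<Rightarrow> ('a list \<Rightarrow> 'a set list \<Rightarrow> real) \<Rightarrow> ('a list \<Rightarrow> 'a rel list \<Rightarrow> 'a rel pmf) \<Rightarrow> bool" where
  "chain_represents T p t \<longleftrightarrow> (\<forall>As \<in> menus T. \<forall>xs. vec_in xs As \<longrightarrow>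
      p xs As = (\<Sum>rs | vec_in rs (map2 Nset xs As). chain_prob t xs rs))"

lemma cdru_imp_chain_represents:
  fixes p :: "'a::finite list \<Rightarrow> 'a set list \<Rightarrow> real"
  assumes "T \<ge> 1" and "cdru T p"
  shows "\<exists>t. lorder_kernel T t \<and> chain_represents T p t"
proof -
  obtain nu :: "'a rel pmf" and t :: "'a list \<Rightarrow> 'a rel list \<Rightarrow> 'a rel pmf" where
    nu: "set_pmf nu \<subseteq> lorders" and
    t: "\<forall>n \<in> {1..T-1}. \<forall>xs rs. length xs = n \<longrightarrow> length rs = n \<longrightarrow> set rs \<subseteq> lorders \<longrightarrow>
          set_pmf (t xs rs) \<subseteq> lorders" and
    p: "\<forall>As \<in> menus T. \<forall>xs. vec_in xs As \<longrightarrow>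
          p xs As = (\<Sum>rs | vec_in rs (map2 Nset xs As).
                       pmf nu (rs ! 0) * (\<Prod>k \<in> {1..<T}. pmf (t (take k xs) (take k rs)) (rs ! k)))"
    using \<open>cdru T p\<close> unfolding cdru_def by (elim exE conjE) (rule that)
  define t' where "t' xs rs = (if xs = [] then nu else t xs rs)" for xs rs
  have "set_pmf (t xs rs) \<subseteq> lorders"
    if "length xs = length rs" "xs \<noteq> []" "length xs < T" "set rs \<subseteq> lorders" for xs rs
  proof -
    have "length xs \<in> {1..T-1}"
      using that by (auto simp: Suc_le_eq)
    with t that show ?thesis
      by auto
  qed
  with nu have "lorder_kernel T t'"
    by (simp add: lorder_kernel_def t'_def)
  moreover have "chain_represents T p t'"
    unfolding chain_represents_def
  proof (intro ballI allI impI)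
    fix As :: "'a set list" and xs :: "'a list"
    assume "As \<in> menus T" "vec_in xs As"
    moreover have "chain_prob t' xs rs
        = pmf nu (rs ! 0) * (\<Prod>k \<in> {1..<T}. pmf (t (take k xs) (take k rs)) (rs ! k))"
      if "vec_in rs (map2 Nset xs As)" for rs
    proof -
      have "rs \<noteq> []" "length rs = T" "length xs = T"
        using that \<open>As \<in> menus T\<close> \<open>vec_in xs As\<close> assms(1) by (auto simp: vec_in_def menus_def)
      then show ?thesis
        unfolding chain_prob_unfold_first[OF \<open>rs \<noteq> []\<close>] by (auto simp: t'_def intro!: prod.cong)
    qed
    ultimately show "p xs As = (\<Sum>rs | vec_in rs (map2 Nset xs As). chain_prob t' xs rs)"
      using p by simp
  qed
  ultimately show ?thesis
    by blast
qed

lemma chain_represents_imp_cdru: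
  fixes p :: "'a::finite list \<Rightarrow> 'a set list \<Rightarrow> real"
  assumes "T \<ge> 1" and t: "lorder_kernel T t" and p: "chain_represents T p t"
  shows "cdru T p"
  unfolding cdru_def
proof (intro exI conjI)
  show "set_pmf (t [] []) \<subseteq> lorders"
    using t assms(1) by (simp add: lorder_kernel_def)
  show "\<forall>n \<in> {1..T-1}. \<forall>xs rs. length xs = n \<longrightarrow> length rs = n \<longrightarrow> set rs \<subseteq> lorders \<longrightarrow>
      set_pmf (t xs rs) \<subseteq> lorders"
  proof (intro ballI allI impI)
    fix n and xs :: "'a list" and rs :: "'a rel list"
    assume "n \<in> {1..T-1}" "length xs = n" "length rs = n" "set rs \<subseteq> lorders"
    moreover have "length xs < T"
      using \<open>n \<in> {1..T-1}\<close> \<open>length xs = n\<close> by auto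
    ultimately show "set_pmf (t xs rs) \<subseteq> lorders"
      using t by (simp add: lorder_kernel_def)
  qed
  show "\<forall>As \<in> menus T. \<forall>xs. vec_in xs As \<longrightarrow>
      p xs As = (\<Sum>rs | vec_in rs (map2 Nset xs As).
                   pmf (t [] []) (rs ! 0) * (\<Prod>k \<in> {1..<T}. pmf (t (take k xs) (take k rs)) (rs ! k)))"
  proof (intro ballI allI impI)
    fix As :: "'a set list" and xs :: "'a list"
    assume "As \<in> menus T" "vec_in xs As"
    moreover have "rs \<noteq> [] \<and> length rs = T" if "vec_in rs (map2 Nset xs As)" for rs
      using that \<open>As \<in> menus T\<close> \<open>vec_in xs As\<close> assms(1) by (auto simp: vec_in_def menus_def)
    ultimately show "p xs As = (\<Sum>rs | vec_in rs (map2 Nset xs As).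
        pmf (t [] []) (rs ! 0) * (\<Prod>k \<in> {1..<T}. pmf (t (take k xs) (take k rs)) (rs ! k)))"
      using p by (auto simp: chain_represents_def chain_prob_unfold_first intro!: sum.cong)
  qed
qed

section \<open>Necessity\<close>

lemma sum_chain_prob_Nset_snoc:
  fixes t :: "'a::finite list \<Rightarrow> 'a rel list \<Rightarrow> 'a rel pmf"
  assumes t: "lorder_kernel T t" and "length xs < T" "vec_in xs As" "B \<noteq> {}"
  shows "(\<Sum>y\<in>B. \<Sum>rs | vec_in rs (map2 Nset (xs @ [y]) (As @ [B])). chain_prob t (xs @ [y]) rs)
       = (\<Sum>rs | vec_in rs (map2 Nset xs As). chain_prob t xs rs)"
proof -
  have len: "length xs = length As"
    using \<open>vec_in xs As\<close> by (rule vec_in_length)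
  have "(\<Sum>y\<in>B. \<Sum>r\<in>Nset y B. pmf (t xs rs) r) = 1" if "vec_in rs (map2 Nset xs As)" for rs
  proof -
    have "set rs \<subseteq> lorders" "length rs = length xs"
      using that len by (auto simp: vec_in_map2 in_set_conv_nth Nset_def)
    then have "set_pmf (t xs rs) \<subseteq> lorders"
      using t \<open>length xs < T\<close> by (simp add: lorder_kernel_def)
    then show ?thesis
      by (simp add: sum_Nset_partition[OF \<open>B \<noteq> {}\<close>] sum_pmf_eq_1)
  qed
  then have "(\<Sum>rs | vec_in rs (map2 Nset xs As). chain_prob t xs rs * (\<Sum>y\<in>B. \<Sum>r\<in>Nset y B. pmf (t xs rs) r))
      = (\<Sum>rs | vec_in rs (map2 Nset xs As). chain_prob t xs rs)"
    by simp
  then show ?thesis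
    by (simp only: sum_chain_prob_snoc[OF len] sum.swap[of _ B] sum_distrib_left)
qed

lemma marg_chain_represents:
  fixes t :: "'a::finite list \<Rightarrow> 'a rel list \<Rightarrow> 'a rel pmf"
  assumes p: "chain_represents T p t" and t: "lorder_kernel T t"
  shows "length As + n = T \<Longrightarrow> vec_in xs As \<Longrightarrow>
    marg p n xs As = (\<Sum>rs | vec_in rs (map2 Nset xs As). chain_prob t xs rs)"
proof (induction n arbitrary: xs As)
  case 0
  then show ?case
    using p vec_in_menus[of xs As] by (simp add: chain_represents_def)
next
  case (Suc n)
  have "marg p (Suc n) xs As
      = (\<Sum>y\<in>UNIV. \<Sum>rs | vec_in rs (map2 Nset (xs @ [y]) (As @ [UNIV])). chain_prob t (xs @ [y]) rs)"
    using Suc by simp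
  also have "\<dots> = (\<Sum>rs | vec_in rs (map2 Nset xs As). chain_prob t xs rs)"
    using Suc.prems by (intro sum_chain_prob_Nset_snoc[OF t]) (auto dest: vec_in_length)
  finally show ?case .
qed

lemma chain_represents_marginality:
  fixes t :: "'a::finite list \<Rightarrow> 'a rel list \<Rightarrow> 'a rel pmf"
  assumes p: "chain_represents T p t" and t: "lorder_kernel T t"
  shows "marginality T p"
  unfolding marginality_def
proof (intro ballI allI impI)
  fix \<tau> :: nat and As :: "'a set list" and xs :: "'a list" and B C :: "'a set"
  assume "\<tau> \<in> {1..T-1}" "As \<in> menus \<tau>" "vec_in xs As" "B \<noteq> {}" "C \<noteq> {}"
  then have "length xs = \<tau>" "\<tau> < T"
    by (auto simp: menus_def dest: vec_in_length)
  have "(\<Sum>y\<in>D. marg p (T - (\<tau> + 1)) (xs @ [y]) (As @ [D]))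
      = (\<Sum>rs | vec_in rs (map2 Nset xs As). chain_prob t xs rs)" if "D \<noteq> {}" for D
  proof -
    have "(\<Sum>y\<in>D. marg p (T - (\<tau> + 1)) (xs @ [y]) (As @ [D]))
        = (\<Sum>y\<in>D. \<Sum>rs | vec_in rs (map2 Nset (xs @ [y]) (As @ [D])). chain_prob t (xs @ [y]) rs)"
      using \<open>vec_in xs As\<close> \<open>length xs = \<tau>\<close> \<open>\<tau> < T\<close>
      by (intro sum.cong refl marg_chain_represents[OF p t]) (auto dest: vec_in_length)
    also have "\<dots> = (\<Sum>rs | vec_in rs (map2 Nset xs As). chain_prob t xs rs)"
      using \<open>vec_in xs As\<close> \<open>length xs = \<tau>\<close> \<open>\<tau> < T\<close> that
      by (intro sum_chain_prob_Nset_snoc[OF t]) simp_all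
    finally show ?thesis .
  qed
  then show "(\<Sum>y\<in>B. marg p (T - (\<tau> + 1)) (xs @ [y]) (As @ [B]))
      = (\<Sum>y\<in>C. marg p (T - (\<tau> + 1)) (xs @ [y]) (As @ [C]))"
    using \<open>B \<noteq> {}\<close> \<open>C \<noteq> {}\<close> by simp
qed

lemma chain_represents_complete_monotone:
  fixes t :: "'a::finite list \<Rightarrow> 'a rel list \<Rightarrow> 'a rel pmf"
  assumes "chain_represents T p t"
  shows "complete_monotone T p"
  unfolding complete_monotone_def
proof (intro exI conjI)
  define q where "q xs Bs = (\<Sum>rs | vec_in rs (map2 Nset_exact xs Bs). chain_prob t xs rs)" for xs Bs
  show "is_moebius_inverse T p q"
    using assms
    by (simp add: is_moebius_inverse_def chain_represents_def q_def sum_Nset_vec_eq_sum_supvecs vec_in_length)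
  show "\<forall>As\<in>menus T. \<forall>xs. vec_in xs As \<longrightarrow> 0 \<le> q xs As"
    by (simp add: q_def sum_nonneg chain_prob_nonneg)
qed

lemma moebius_unique:
  fixes f g :: "'b \<Rightarrow> 'c::ab_group_add" and U :: "'b \<Rightarrow> 'b set"
  assumes fin: "\<And>a. a \<in> S \<Longrightarrow> finite (U a)"
    and self: "\<And>a. a \<in> S \<Longrightarrow> a \<in> U a"
    and up: "\<And>a b. a \<in> S \<Longrightarrow> b \<in> U a \<Longrightarrow> b \<in> S \<and> U b \<subseteq> U a"
    and antisym: "\<And>a b. a \<in> S \<Longrightarrow> b \<in> U a \<Longrightarrow> a \<in> U b \<Longrightarrow> a = b"
    and sums: "\<And>a. a \<in> S \<Longrightarrow> sum f (U a) = sum g (U a)"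
    and "a \<in> S"
  shows "f a = g a"
  using \<open>a \<in> S\<close>
proof (induction "card (U a)" arbitrary: a rule: less_induct)
  case (less a)
  have "f b = g b" if b: "b \<in> U a - {a}" for b
  proof -
    have "U b \<subset> U a"
      using up[OF less.prems] antisym[OF less.prems] self[OF less.prems] b by blast
    then have "card (U b) < card (U a)"
      by (rule psubset_card_mono[OF fin[OF less.prems]])
    then show ?thesis
      using less.hyps up[OF less.prems] b by blast
  qed
  then have "sum f (U a - {a}) = sum g (U a - {a})"
    by (rule sum.cong[OF refl])
  with sums[OF less.prems] show ?case
    using sum.remove[OF fin self, OF less.prems less.prems] by (metis add_right_cancel)
qed

lemma moebius_unique_supvecs:
  fixes f g :: "'a::finite set list \<Rightarrow> 'c::ab_group_add"
  assumes "vec_in xs Bs"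
    and "\<And>Bs. vec_in xs Bs \<Longrightarrow> (\<Sum>Cs\<in>supvecs Bs. f Cs) = (\<Sum>Cs\<in>supvecs Bs. g Cs)"
  shows "f Bs = g Bs"
proof (rule moebius_unique[where S = "{Bs. vec_in xs Bs}" and U = supvecs])
  show "As = Bs" if "As \<in> {Bs. vec_in xs Bs}" "Bs \<in> supvecs As" "As \<in> supvecs Bs" for As Bs
    using that by (auto simp: supvecs_def intro!: nth_equalityI)
next
  show "Cs \<in> {Bs. vec_in xs Bs} \<and> supvecs Cs \<subseteq> supvecs As"
    if "As \<in> {Bs. vec_in xs Bs}" "Cs \<in> supvecs As" for As Cs
    using that unfolding supvecs_def vec_in_def by auto blast
qed (use assms finite_supvecs in \<open>auto simp: supvecs_def\<close>)

section \<open>Falmagne's construction\<close>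

(* f y C is the flow from C to C - {y} in the lattice of subsets. *)

definition outflow :: "('a \<Rightarrow> 'a set \<Rightarrow> real) \<Rightarrow> 'a set \<Rightarrow> real" where
  "outflow f C = (\<Sum>y\<in>C. f y C)"

definition inflow :: "('a \<Rightarrow> 'a set \<Rightarrow> real) \<Rightarrow> 'a set \<Rightarrow> real" where
  "inflow f C = (\<Sum>y\<in>-C. f y (insert y C))"

definition block_marschak :: "('a \<Rightarrow> 'a set \<Rightarrow> real) \<Rightarrow> bool" where
  "block_marschak f \<longleftrightarrow> (\<forall>C. \<forall>y\<in>C. 0 \<le> f y C) \<and> (\<forall>D. D \<noteq> {} \<longrightarrow> (\<Sum>y\<in>D. \<Sum>C | D \<subseteq> C. f y C) = 1)"

lemma sum_inflow_supsets:
  fixes f :: "'a::finite \<Rightarrow> 'a set \<Rightarrow> real"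
  shows "(\<Sum>D | R \<subseteq> D. inflow f D) = (\<Sum>E | R \<subseteq> E. \<Sum>y\<in>E - R. f y E)"
proof -
  have "(\<Sum>D | R \<subseteq> D. inflow f D) = (\<Sum>(D, y)\<in>Sigma {D. R \<subseteq> D} uminus. f y (insert y D))"
    by (simp add: inflow_def sum.Sigma)
  also have "\<dots> = (\<Sum>(E, y)\<in>Sigma {E. R \<subseteq> E} (\<lambda>E. E - R). f y E)"
    by (rule sum.reindex_bij_witness[where i = "\<lambda>(E, y). (E - {y}, y)" and j = "\<lambda>(D, y). (insert y D, y)"])
      (auto simp: insert_absorb)
  also have "\<dots> = (\<Sum>E | R \<subseteq> E. \<Sum>y\<in>E - R. f y E)"
    by (simp add: sum.Sigma)
  finally show ?thesis .
qed

lemma flow_conservation: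
  fixes f :: "'a::finite \<Rightarrow> 'a set \<Rightarrow> real"
  assumes "block_marschak f" and "C \<noteq> {}"
  shows "outflow f C - inflow f C = (if C = UNIV then 1 else 0)"
proof (rule moebius_unique[where S = "{D. D \<noteq> {}}" and U = "\<lambda>D. {E. D \<subseteq> E}"
      and f = "\<lambda>D. outflow f D - inflow f D" and g = "\<lambda>D. if D = UNIV then 1 else 0"])
  fix R :: "'a set" assume "R \<in> {D. D \<noteq> {}}"
  have "(\<Sum>E | R \<subseteq> E. outflow f E - inflow f E) = (\<Sum>E | R \<subseteq> E. outflow f E - (\<Sum>y\<in>E - R. f y E))"
    by (simp add: sum_subtractf sum_inflow_supsets)
  also have "\<dots> = (\<Sum>E | R \<subseteq> E. \<Sum>y\<in>R. f y E)"
  proof (intro sum.cong refl)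
    fix E assume "E \<in> {E. R \<subseteq> E}"
    then have "outflow f E = (\<Sum>y\<in>E - R. f y E) + (\<Sum>y\<in>R. f y E)"
      unfolding outflow_def by (intro sum.subset_diff) auto
    then show "outflow f E - (\<Sum>y\<in>E - R. f y E) = (\<Sum>y\<in>R. f y E)"
      by simp
  qed
  also have "\<dots> = 1"
    using assms(1) \<open>R \<in> {D. D \<noteq> {}}\<close> by (simp add: sum.swap[of _ R] block_marschak_def)
  also have "\<dots> = (\<Sum>E | R \<subseteq> E. if E = UNIV then 1 else 0)"
    by simp
  finally show "(\<Sum>E | R \<subseteq> E. outflow f E - inflow f E) = (\<Sum>E | R \<subseteq> E. if E = UNIV then 1 else 0 :: real)" .
qed (use assms(2) in auto)

fun rel_of_list :: "'a list \<Rightarrow> 'a rel" where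
  "rel_of_list [] = {}"
| "rel_of_list (x # xs) = {x} \<times> set xs \<union> rel_of_list xs"

lemma rel_of_list_subset: "rel_of_list l \<subseteq> set l \<times> set l"
  by (induction l) auto

lemma rel_of_list_append: "rel_of_list (u @ v) = rel_of_list u \<union> set u \<times> set v \<union> rel_of_list v"
  by (induction u) auto

lemma strict_linear_order_on_rel_of_list:
  "distinct l \<Longrightarrow> strict_linear_order_on (set l) (rel_of_list l)"
proof (induction l)
  case (Cons x l)
  then show ?case
    using rel_of_list_subset[of l]
    by (auto simp: strict_linear_order_on_def trans_def irrefl_def total_on_def)
qed (simp add: strict_linear_order_on_def)

lemma rel_of_list_lorders: "l \<in> permutations_of_set UNIV \<Longrightarrow> rel_of_list l \<in> lorders"
  using strict_linear_order_on_rel_of_list[of l]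
  by (simp add: lorders_def permutations_of_set_def)

lemma lower_set_rel_of_list:
  "distinct (u @ y # v) \<Longrightarrow> lower_set y (rel_of_list (u @ y # v)) = insert y (set v)"
  using rel_of_list_subset[of u] rel_of_list_subset[of v]
  by (auto simp: lower_set_def rel_of_list_append)

lemma permutations_of_set_nonempty_snoc:
  assumes "A \<noteq> {}"
  shows "permutations_of_set A = (\<Union>y\<in>A. (\<lambda>u. u @ [y]) ` permutations_of_set (A - {y}))"
proof -
  have "permutations_of_set A = rev ` permutations_of_set A"
    by simp
  also have "\<dots> = (\<Union>y\<in>A. (\<lambda>u. rev u @ [y]) ` permutations_of_set (A - {y}))"
    by (subst permutations_of_set_nonempty[OF assms]) (simp add: image_UN image_image)
  also have "\<dots> = (\<Union>y\<in>A. (\<lambda>u. u @ [y]) ` rev ` permutations_of_set (A - {y}))"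
    by (simp only: image_image)
  finally show ?thesis
    by (simp only: rev_permutations_of_set)
qed

(* prefix_prob f C l is the probability that, when the alternatives in C are still unlisted, the
   next ones listed (from the top) are l; next_prob is proportional to f y C, and its uniform
   fallback only keeps it a distribution where these weights are unusable. *)

definition next_prob :: "('a \<Rightarrow> 'a set \<Rightarrow> real) \<Rightarrow> 'a set \<Rightarrow> 'a \<Rightarrow> real" where
  "next_prob f C y =
    (if (\<forall>z\<in>C. 0 \<le> f z C) \<and> outflow f C > 0 then f y C / outflow f C else 1 / real (card C))"

fun prefix_prob :: "('a \<Rightarrow> 'a set \<Rightarrow> real) \<Rightarrow> 'a set \<Rightarrow> 'a list \<Rightarrow> real" where
  "prefix_prob f C [] = 1"
| "prefix_prob f C (y # ys) = next_prob f C y * prefix_prob f (C - {y}) ys"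

lemma next_prob_nonneg: "y \<in> C \<Longrightarrow> 0 \<le> next_prob f C y"
  by (auto simp: next_prob_def)

lemma sum_next_prob:
  assumes "finite C" "C \<noteq> {}"
  shows "(\<Sum>y\<in>C. next_prob f C y) = 1"
proof (cases "(\<forall>z\<in>C. 0 \<le> f z C) \<and> outflow f C > 0")
  case True
  then have "(\<Sum>y\<in>C. next_prob f C y) = (\<Sum>y\<in>C. f y C) / outflow f C"
    by (simp add: next_prob_def sum_divide_distrib)
  with True show ?thesis
    by (simp add: outflow_def)
next
  case False
  then have "next_prob f C y = 1 / real (card C)" for y
    unfolding next_prob_def by (rule if_not_P)
  with assms show ?thesis
    by (simp add: card_gt_0_iff)
qed

lemma outflow_mult_next_prob:
  assumes "\<And>z. z \<in> C \<Longrightarrow> 0 \<le> f z C" "finite C" "y \<in> C"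
  shows "outflow f C * next_prob f C y = f y C"
proof (cases "outflow f C > 0")
  case True
  with assms(1) show ?thesis
    by (simp add: next_prob_def)
next
  case False
  moreover have "0 \<le> outflow f C"
    unfolding outflow_def using assms(1) by (simp add: sum_nonneg)
  ultimately have "outflow f C = 0"
    by simp
  then have "f y C = 0"
    using assms sum_nonneg_eq_0_iff[of C "\<lambda>z. f z C"] by (simp add: outflow_def)
  with \<open>outflow f C = 0\<close> show ?thesis
    by simp
qed

lemma prefix_prob_nonneg: "distinct l \<Longrightarrow> set l \<subseteq> C \<Longrightarrow> 0 \<le> prefix_prob f C l"
proof (induction l arbitrary: C)
  case (Cons y l)
  then have "0 \<le> prefix_prob f (C - {y}) l"
    by (intro Cons.IH) auto
  with Cons.prems show ?case
    by (simp add: next_prob_nonneg)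
qed simp

lemma prefix_prob_append: "prefix_prob f C (u @ v) = prefix_prob f C u * prefix_prob f (C - set u) v"
  by (induction u arbitrary: C) (simp_all add: Diff_insert2[symmetric] mult.assoc)

lemma sum_prefix_prob_permutations:
  "finite C \<Longrightarrow> (\<Sum>l\<in>permutations_of_set C. prefix_prob f C l) = 1"
proof (induction "card C" arbitrary: C rule: less_induct)
  case less
  show ?case
  proof (cases "C = {}")
    case False
    have "(\<Sum>l\<in>permutations_of_set C. prefix_prob f C l)
        = (\<Sum>y\<in>C. \<Sum>u\<in>permutations_of_set (C - {y}). next_prob f C y * prefix_prob f (C - {y}) u)"
      unfolding permutations_of_set_nonempty[OF False] using less.prems
      by (subst sum.UNION_disjoint) (auto simp: sum.reindex)
    also have "\<dots> = (\<Sum>y\<in>C. next_prob f C y)"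
    proof (intro sum.cong refl)
      fix y assume "y \<in> C"
      with less.prems card_Diff1_less[of C y]
      have "(\<Sum>u\<in>permutations_of_set (C - {y}). prefix_prob f (C - {y}) u) = 1"
        by (intro less.hyps) auto
      then show "(\<Sum>u\<in>permutations_of_set (C - {y}). next_prob f C y * prefix_prob f (C - {y}) u)
          = next_prob f C y"
        by (simp add: sum_distrib_left[symmetric])
    qed
    also have "\<dots> = 1"
      using less.prems False by (rule sum_next_prob)
    finally show ?thesis .
  qed simp
qed

lemma sum_prefix_prob_snoc:
  "(\<Sum>u\<in>permutations_of_set (-insert y C). prefix_prob f UNIV (u @ [y]))
     = (\<Sum>u\<in>permutations_of_set (-insert y C). prefix_prob f UNIV u) * next_prob f (insert y C) y"
proof -
  have "UNIV - set u = insert y C" if "u \<in> permutations_of_set (-insert y C)" for u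
    using that by (auto simp: permutations_of_set_def)
  then show ?thesis
    by (simp add: prefix_prob_append sum_distrib_right)
qed

lemma sum_prefix_prob_remaining:
  fixes f :: "'a::finite \<Rightarrow> 'a set \<Rightarrow> real"
  assumes f: "block_marschak f" and "C \<noteq> {}"
  shows "(\<Sum>u\<in>permutations_of_set (-C). prefix_prob f UNIV u) = outflow f C"
  using \<open>C \<noteq> {}\<close>
proof (induction "card (-C)" arbitrary: C rule: less_induct)
  case less
  show ?case
  proof (cases "C = UNIV")
    case True
    have "(\<Sum>y\<in>UNIV. \<Sum>C | UNIV \<subseteq> C. f y C) = 1"
      using f unfolding block_marschak_def by blast
    with True show ?thesis
      by (simp add: outflow_def)
  next
    case False
    then have "-C \<noteq> {}"
      by auto
    have "(\<Sum>u\<in>permutations_of_set (-C). prefix_prob f UNIV u)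
        = (\<Sum>y\<in>-C. \<Sum>u\<in>permutations_of_set (-insert y C). prefix_prob f UNIV (u @ [y]))"
      unfolding permutations_of_set_nonempty_snoc[OF \<open>-C \<noteq> {}\<close>]
      by (subst sum.UNION_disjoint) (auto simp: sum.reindex inj_on_def Compl_insert)
    also have "\<dots> = (\<Sum>y\<in>-C. outflow f (insert y C) * next_prob f (insert y C) y)"
    proof (intro sum.cong refl)
      fix y assume "y \<in> -C"
      then have "card (-insert y C) < card (-C)"
        by (intro psubset_card_mono) auto
      then have "(\<Sum>u\<in>permutations_of_set (-insert y C). prefix_prob f UNIV u) = outflow f (insert y C)"
        by (intro less.hyps) auto
      then show "(\<Sum>u\<in>permutations_of_set (-insert y C). prefix_prob f UNIV (u @ [y]))
          = outflow f (insert y C) * next_prob f (insert y C) y"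
        by (simp add: sum_prefix_prob_snoc)
    qed
    also have "\<dots> = inflow f C"
      using f unfolding inflow_def by (intro sum.cong refl outflow_mult_next_prob) (auto simp: block_marschak_def)
    also have "\<dots> = outflow f C"
      using flow_conservation[OF f less.prems] False by simp
    finally show ?thesis .
  qed
qed

lemma permutations_of_set_lower_set:
  fixes y :: "'a::finite"
  assumes "y \<in> C"
  shows "{l \<in> permutations_of_set UNIV. lower_set y (rel_of_list l) = C}
       = (\<lambda>(u, v). u @ y # v) ` (permutations_of_set (-C) \<times> permutations_of_set (C - {y}))"
proof (intro equalityI subsetI)
  fix l assume "l \<in> {l \<in> permutations_of_set UNIV. lower_set y (rel_of_list l) = C}"
  then have l: "distinct l" "set l = UNIV" "lower_set y (rel_of_list l) = C"
    by (auto simp: permutations_of_set_def)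
  then obtain u v where "l = u @ y # v"
    by (metis UNIV_I split_list)
  with l have "C = insert y (set v)"
    by (simp add: lower_set_rel_of_list)
  with l \<open>l = u @ y # v\<close> show "l \<in> (\<lambda>(u, v). u @ y # v) ` (permutations_of_set (-C) \<times> permutations_of_set (C - {y}))"
    by (intro image_eqI[where x = "(u, v)"]) (auto simp: permutations_of_set_def)
next
  fix l assume "l \<in> (\<lambda>(u, v). u @ y # v) ` (permutations_of_set (-C) \<times> permutations_of_set (C - {y}))"
  then obtain u v where l: "l = u @ y # v" and "u \<in> permutations_of_set (-C)" "v \<in> permutations_of_set (C - {y})"
    by auto
  with assms have "distinct l" "set u = -C" "set v = C - {y}"
    by (auto simp: permutations_of_set_def)
  with assms l show "l \<in> {l \<in> permutations_of_set UNIV. lower_set y (rel_of_list l) = C}"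
    by (auto simp: permutations_of_set_def lower_set_rel_of_list)
qed

lemma sum_prefix_prob_lower_set:
  fixes f :: "'a::finite \<Rightarrow> 'a set \<Rightarrow> real"
  assumes "y \<in> C"
  shows "(\<Sum>l\<in>{l \<in> permutations_of_set UNIV. lower_set y (rel_of_list l) = C}. prefix_prob f UNIV l)
       = (\<Sum>u\<in>permutations_of_set (-C). prefix_prob f UNIV u) * next_prob f C y"
proof -
  have "inj_on (\<lambda>(u, v). u @ y # v) (permutations_of_set (-C) \<times> permutations_of_set (C - {y}))"
    using assms by (auto simp: inj_on_def permutations_of_set_def append_Cons_eq_iff)
  then have "(\<Sum>l\<in>{l \<in> permutations_of_set UNIV. lower_set y (rel_of_list l) = C}. prefix_prob f UNIV l)
      = (\<Sum>u\<in>permutations_of_set (-C). \<Sum>v\<in>permutations_of_set (C - {y}). prefix_prob f UNIV (u @ y # v))"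
    by (simp add: permutations_of_set_lower_set[OF assms] sum.reindex sum.cartesian_product case_prod_unfold)
  also have "\<dots> = (\<Sum>u\<in>permutations_of_set (-C). \<Sum>v\<in>permutations_of_set (C - {y}).
      prefix_prob f UNIV u * (next_prob f C y * prefix_prob f (C - {y}) v))"
  proof (intro sum.cong refl)
    fix u v assume "u \<in> permutations_of_set (-C)"
    then have "UNIV - set u = C"
      by (auto simp: permutations_of_set_def)
    then show "prefix_prob f UNIV (u @ y # v) = prefix_prob f UNIV u * (next_prob f C y * prefix_prob f (C - {y}) v)"
      by (simp add: prefix_prob_append)
  qed
  also have "\<dots> = (\<Sum>u\<in>permutations_of_set (-C). prefix_prob f UNIV u) * next_prob f C y"
    by (simp add: sum_distrib_left[symmetric] sum_distrib_right sum_prefix_prob_permutations)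
  finally show ?thesis .
qed

definition falmagne_density :: "('a::finite \<Rightarrow> 'a set \<Rightarrow> real) \<Rightarrow> 'a rel \<Rightarrow> real" where
  "falmagne_density f r = (\<Sum>l\<in>{l \<in> permutations_of_set UNIV. rel_of_list l = r}. prefix_prob f UNIV l)"

definition falmagne_pmf :: "('a::finite \<Rightarrow> 'a set \<Rightarrow> real) \<Rightarrow> 'a rel pmf" where
  "falmagne_pmf f = embed_pmf (falmagne_density f)"

lemma pmf_falmagne_pmf: "pmf (falmagne_pmf f) r = falmagne_density f r"
proof -
  have nonneg: "0 \<le> falmagne_density f r" for r
    unfolding falmagne_density_def
    by (intro sum_nonneg prefix_prob_nonneg) (auto simp: permutations_of_set_def)
  have "(\<Sum>r\<in>UNIV. falmagne_density f r) = (\<Sum>l\<in>permutations_of_set UNIV. prefix_prob f UNIV l)"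
    unfolding falmagne_density_def by (rule sum.group) auto
  then have "(\<Sum>r\<in>UNIV. falmagne_density f r) = 1"
    by (simp add: sum_prefix_prob_permutations)
  then have "(\<integral>\<^sup>+r. ennreal (falmagne_density f r) \<partial>count_space UNIV) = 1"
    by (simp add: nn_integral_count_space_finite nonneg)
  then show ?thesis
    unfolding falmagne_pmf_def by (intro pmf_embed_pmf nonneg)
qed

lemma set_pmf_falmagne_pmf: "set_pmf (falmagne_pmf f) \<subseteq> lorders"
proof
  fix r assume "r \<in> set_pmf (falmagne_pmf f)"
  then have "falmagne_density f r \<noteq> 0"
    by (simp add: set_pmf_iff pmf_falmagne_pmf)
  then have "{l \<in> permutations_of_set UNIV. rel_of_list l = r} \<noteq> {}"
    unfolding falmagne_density_def by (metis sum.empty)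
  then obtain l where "l \<in> permutations_of_set UNIV" "rel_of_list l = r"
    by blast
  then show "r \<in> lorders"
    using rel_of_list_lorders by blast
qed

lemma sum_pmf_falmagne_Nset_exact:
  fixes f :: "'a::finite \<Rightarrow> 'a set \<Rightarrow> real"
  assumes f: "block_marschak f" and "y \<in> C"
  shows "(\<Sum>r\<in>Nset_exact y C. pmf (falmagne_pmf f) r) = f y C"
proof -
  let ?L = "{l \<in> permutations_of_set UNIV. lower_set y (rel_of_list l) = C}"
  have "(\<Sum>r\<in>Nset_exact y C. pmf (falmagne_pmf f) r)
      = (\<Sum>r\<in>Nset_exact y C. \<Sum>l\<in>{l \<in> ?L. rel_of_list l = r}. prefix_prob f UNIV l)"
    unfolding pmf_falmagne_pmf falmagne_density_def
    by (intro sum.cong refl arg_cong[where f = "sum _"]) (auto simp: Nset_exact_def)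
  also have "\<dots> = (\<Sum>l\<in>?L. prefix_prob f UNIV l)"
    by (rule sum.group) (auto simp: Nset_exact_def rel_of_list_lorders)
  also have "\<dots> = outflow f C * next_prob f C y"
    using sum_prefix_prob_remaining[OF f, of C] assms by (auto simp: sum_prefix_prob_lower_set)
  also have "\<dots> = f y C"
    using assms by (intro outflow_mult_next_prob) (auto simp: block_marschak_def)
  finally show ?thesis .
qed

lemma sum_pmf_falmagne_Nset_exact_scaled:
  fixes g :: "'a::finite \<Rightarrow> 'a set \<Rightarrow> real"
  assumes nonneg: "\<And>y C. y \<in> C \<Longrightarrow> 0 \<le> g y C"
    and total: "\<And>D. D \<noteq> {} \<Longrightarrow> (\<Sum>y\<in>D. \<Sum>C | D \<subseteq> C. g y C) = c"
    and "y \<in> C"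
  shows "c * (\<Sum>r\<in>Nset_exact y C. pmf (falmagne_pmf (\<lambda>y C. g y C / c)) r) = g y C"
proof -
  have "g y C \<le> (\<Sum>C' | {y} \<subseteq> C'. g y C')"
    using \<open>y \<in> C\<close> nonneg by (intro member_le_sum) auto
  also have "\<dots> = c"
    using total[of "{y}"] by simp
  finally have "g y C \<le> c" .
  show ?thesis
  proof (cases "c = 0")
    case True
    with \<open>g y C \<le> c\<close> nonneg[OF \<open>y \<in> C\<close>] show ?thesis
      by simp
  next
    case False
    with \<open>g y C \<le> c\<close> nonneg[OF \<open>y \<in> C\<close>] have "c > 0"
      by simp
    with nonneg total have "block_marschak (\<lambda>y C. g y C / c)"
      by (simp add: block_marschak_def sum_divide_distrib[symmetric])
    with \<open>c > 0\<close> \<open>y \<in> C\<close> show ?thesis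
      by (simp add: sum_pmf_falmagne_Nset_exact)
  qed
qed

section \<open>Sufficiency\<close>

(* The normaliser marg q (Suc n) xs Bs vanishes only on histories of probability zero, where
   the transition is irrelevant. *)

definition moebius_transition ::
  "nat \<Rightarrow> ('a::finite list \<Rightarrow> 'a set list \<Rightarrow> real) \<Rightarrow> 'a list \<Rightarrow> 'a rel list \<Rightarrow> 'a rel pmf" where
  "moebius_transition T q xs rs =
    (let Bs = map2 lower_set xs rs; n = T - Suc (length xs)
     in falmagne_pmf (\<lambda>y C. marg q n (xs @ [y]) (Bs @ [C]) / marg q (Suc n) xs Bs))"

lemma lorder_kernel_moebius_transition: "lorder_kernel T (moebius_transition T q)"
  by (simp add: lorder_kernel_def moebius_transition_def Let_def set_pmf_falmagne_pmf)

context
  fixes T :: nat and p q :: "'a::finite list \<Rightarrow> 'a set list \<Rightarrow> real"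
  assumes rjcr: "is_rjcr T p" and marginal: "marginality T p"
    and moebius: "is_moebius_inverse T p q"
    and q_nonneg: "\<forall>As\<in>menus T. \<forall>xs. vec_in xs As \<longrightarrow> 0 \<le> q xs As"
begin

lemma sum_marg_eq_1:
  "length As + n = T \<Longrightarrow> As \<in> menus (length As) \<Longrightarrow> (\<Sum>xs | vec_in xs As. marg p n xs As) = 1"
proof (induction n arbitrary: As)
  case 0
  with rjcr show ?case
    by (simp add: is_rjcr_def)
next
  case (Suc n)
  have "(\<Sum>xs | vec_in xs As. marg p (Suc n) xs As) = (\<Sum>xs | vec_in xs (As @ [UNIV]). marg p n xs (As @ [UNIV]))"
    by (simp add: sum_vec_in_snoc)
  also have "\<dots> = 1"
    using Suc.prems by (intro Suc.IH) (auto simp: menus_def)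
  finally show ?case .
qed

lemma marg_moebius:
  "length As + n = T \<Longrightarrow> vec_in xs As \<Longrightarrow> marg p n xs As = (\<Sum>Bs\<in>supvecs As. marg q n xs Bs)"
proof (induction n arbitrary: xs As)
  case 0
  with moebius vec_in_menus[OF 0(2)] show ?case
    by (simp add: is_moebius_inverse_def)
next
  case (Suc n)
  then have "marg p (Suc n) xs As = (\<Sum>y\<in>UNIV. \<Sum>Bs\<in>supvecs (As @ [UNIV]). marg q n (xs @ [y]) Bs)"
    by simp
  also have "\<dots> = (\<Sum>Bs\<in>supvecs As. \<Sum>y\<in>UNIV. marg q n (xs @ [y]) (Bs @ [UNIV]))"
    by (simp add: sum_supvecs_snoc sum.swap[of _ UNIV])
  also have "\<dots> = (\<Sum>Bs\<in>supvecs As. marg q (Suc n) xs Bs)"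
    by simp
  finally show ?case .
qed

lemma marg_nonneg: "length Bs + n = T \<Longrightarrow> vec_in xs Bs \<Longrightarrow> 0 \<le> marg q n xs Bs"
proof (induction n arbitrary: xs Bs)
  case 0
  with q_nonneg vec_in_menus[OF 0(2)] show ?case
    by simp
next
  case (Suc n)
  then show ?case
    by (simp add: sum_nonneg)
qed

lemma sum_marg_snoc:
  assumes "length As + Suc n = T" "vec_in xs As" "D \<noteq> {}"
  shows "(\<Sum>y\<in>D. marg p n (xs @ [y]) (As @ [D])) = marg p (Suc n) xs As"
proof (cases "As = []")
  case True
  with assms have "(\<Sum>ys | vec_in ys [D]. marg p n ys [D]) = 1" "marg p (Suc n) [] [] = 1"
    using sum_marg_eq_1[of "[D]" n] sum_marg_eq_1[of "[]" "Suc n"] by (simp_all add: menus_def)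
  with True assms(2) show ?thesis
    by (simp add: sum_vec_in_singleton)
next
  case False
  with assms have "length As \<in> {1..T-1}" "As \<in> menus (length As)" "T - (length As + 1) = n"
    by (auto simp: vec_in_menus Suc_le_eq)
  with marginal assms have "(\<Sum>y\<in>D. marg p n (xs @ [y]) (As @ [D])) = (\<Sum>y\<in>UNIV. marg p n (xs @ [y]) (As @ [UNIV]))"
    unfolding marginality_def by (metis UNIV_not_empty)
  then show ?thesis
    by simp
qed

lemma sum_marg_moebius_snoc:
  assumes "length Bs + Suc n = T" "vec_in xs Bs" "D \<noteq> {}"
  shows "(\<Sum>y\<in>D. \<Sum>C | D \<subseteq> C. marg q n (xs @ [y]) (Bs @ [C])) = marg q (Suc n) xs Bs"
  using assms(2)
proof (rule moebius_unique_supvecs[where f = "\<lambda>Bs. \<Sum>y\<in>D. \<Sum>C | D \<subseteq> C. marg q n (xs @ [y]) (Bs @ [C])"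
      and g = "marg q (Suc n) xs"])
  fix As assume "vec_in xs As"
  with assms have len: "length As + Suc n = T"
    by (simp add: vec_in_length[symmetric])
  have "(\<Sum>Cs\<in>supvecs As. \<Sum>y\<in>D. \<Sum>C | D \<subseteq> C. marg q n (xs @ [y]) (Cs @ [C]))
      = (\<Sum>y\<in>D. \<Sum>Cs\<in>supvecs (As @ [D]). marg q n (xs @ [y]) Cs)"
    unfolding sum_supvecs_snoc by (rule sum.swap)
  also have "\<dots> = (\<Sum>y\<in>D. marg p n (xs @ [y]) (As @ [D]))"
    using len \<open>vec_in xs As\<close> by (intro sum.cong refl marg_moebius[symmetric]) auto
  also have "\<dots> = marg p (Suc n) xs As"
    using len \<open>vec_in xs As\<close> \<open>D \<noteq> {}\<close> by (rule sum_marg_snoc)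
  also have "\<dots> = (\<Sum>Cs\<in>supvecs As. marg q (Suc n) xs Cs)"
    using len \<open>vec_in xs As\<close> by (rule marg_moebius)
  finally show "(\<Sum>Cs\<in>supvecs As. \<Sum>y\<in>D. \<Sum>C | D \<subseteq> C. marg q n (xs @ [y]) (Cs @ [C]))
      = (\<Sum>Cs\<in>supvecs As. marg q (Suc n) xs Cs)" .
qed

lemma sum_chain_prob_moebius_transition:
  "length xs \<le> T \<Longrightarrow> vec_in xs Bs \<Longrightarrow>
    (\<Sum>rs | vec_in rs (map2 Nset_exact xs Bs). chain_prob (moebius_transition T q) xs rs)
      = marg q (T - length xs) xs Bs"
proof (induction xs arbitrary: Bs rule: rev_induct)
  case Nil
  then have "Bs = []"
    by (simp add: vec_in_def)
  moreover have "marg q T [] [] = 1"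
    using marg_moebius[of "[]" T "[]"] sum_marg_eq_1[of "[]" T] by (simp add: menus_def)
  ultimately show ?case
    by simp
next
  case (snoc y xs)
  then obtain Bs' C where Bs: "Bs = Bs' @ [C]"
    by (cases Bs rule: rev_cases) (auto simp: vec_in_def)
  with snoc.prems have v: "vec_in xs Bs'" "y \<in> C" and len: "length xs = length Bs'"
    by (simp_all add: vec_in_length)
  define n where "n = T - Suc (length xs)"
  with snoc.prems have Tn: "T - length xs = Suc n"
    by simp
  let ?t = "moebius_transition T q"
  let ?F = "falmagne_pmf (\<lambda>y C. marg q n (xs @ [y]) (Bs' @ [C]) / marg q (Suc n) xs Bs')"
  have t: "?t xs rs = ?F" if "vec_in rs (map2 Nset_exact xs Bs')" for rs
    using map2_lower_set_Nset_exact[OF len that] by (simp add: moebius_transition_def Let_def n_def)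
  have "(\<Sum>rs | vec_in rs (map2 Nset_exact (xs @ [y]) Bs). chain_prob ?t (xs @ [y]) rs)
      = (\<Sum>rs | vec_in rs (map2 Nset_exact xs Bs'). chain_prob ?t xs rs * (\<Sum>r\<in>Nset_exact y C. pmf ?F r))"
    unfolding Bs sum_chain_prob_snoc[OF len] by (intro sum.cong refl) (simp add: t)
  also have "\<dots> = marg q (Suc n) xs Bs' * (\<Sum>r\<in>Nset_exact y C. pmf ?F r)"
    using snoc.IH[OF _ v(1)] snoc.prems(1) by (simp add: sum_distrib_right[symmetric] Tn)
  also have "\<dots> = marg q n (xs @ [y]) (Bs' @ [C])"
  proof (rule sum_pmf_falmagne_Nset_exact_scaled)
    show "0 \<le> marg q n (xs @ [z]) (Bs' @ [E])" if "z \<in> E" for z E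
      using that v len snoc.prems(1) by (intro marg_nonneg) (auto simp: n_def)
    show "(\<Sum>z\<in>D. \<Sum>E | D \<subseteq> E. marg q n (xs @ [z]) (Bs' @ [E])) = marg q (Suc n) xs Bs'" if "D \<noteq> {}" for D
      using that v len snoc.prems(1) by (intro sum_marg_moebius_snoc) (auto simp: n_def)
  qed (rule v(2))
  finally show ?case
    by (simp add: Bs n_def)
qed

lemma chain_represents_moebius_transition: "chain_represents T p (moebius_transition T q)"
  unfolding chain_represents_def
proof (intro ballI allI impI)
  fix As :: "'a set list" and xs :: "'a list"
  assume "As \<in> menus T" "vec_in xs As"
  then have "length xs = T"
    by (simp add: menus_def vec_in_def)
  have "p xs As = (\<Sum>Bs\<in>supvecs As. q xs Bs)"
    using moebius \<open>As \<in> menus T\<close> \<open>vec_in xs As\<close> by (simp add: is_moebius_inverse_def)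
  also have "\<dots> = (\<Sum>Bs\<in>supvecs As. \<Sum>rs | vec_in rs (map2 Nset_exact xs Bs). chain_prob (moebius_transition T q) xs rs)"
    using \<open>length xs = T\<close> \<open>vec_in xs As\<close>
    by (intro sum.cong refl) (simp add: sum_chain_prob_moebius_transition vec_in_supvecs)
  also have "\<dots> = (\<Sum>rs | vec_in rs (map2 Nset xs As). chain_prob (moebius_transition T q) xs rs)"
    using \<open>vec_in xs As\<close> by (simp add: sum_Nset_vec_eq_sum_supvecs vec_in_length)
  finally show "p xs As = (\<Sum>rs | vec_in rs (map2 Nset xs As). chain_prob (moebius_transition T q) xs rs)" .
qed

end

theorem theorem11:
  fixes T :: nat and p :: "'a::finite list \<Rightarrow> 'a set list \<Rightarrow> real"
  assumes "T \<ge> 1" and "is_rjcr T p"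
  shows "cdru T p \<longleftrightarrow> marginality T p \<and> complete_monotone T p"
proof
  assume "cdru T p"
  with assms(1) obtain t where "lorder_kernel T t" "chain_represents T p t"
    using cdru_imp_chain_represents by blast
  then show "marginality T p \<and> complete_monotone T p"
    by (simp add: chain_represents_marginality chain_represents_complete_monotone)
next
  assume "marginality T p \<and> complete_monotone T p"
  then obtain q where "marginality T p" "is_moebius_inverse T p q"
      "\<forall>As\<in>menus T. \<forall>xs. vec_in xs As \<longrightarrow> 0 \<le> q xs As"
    unfolding complete_monotone_def by blast
  with assms(2) have "chain_represents T p (moebius_transition T q)"
    by (intro chain_represents_moebius_transition)
  with assms(1) lorder_kernel_moebius_transition show "cdru T p"
    by (rule chain_represents_imp_cdru)
qed

end
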